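(* Let $f$ be the map from countable graphs to structures in the class $\mathfrak C$ described in the context. For all countable graphs $\mathcal G,\mathcal H$: $\mathcal G$ embeds into $\mathcal H$ if and only if $f(\mathcal G)$ is elementarily embeddable into $f(\mathcal H)$.
   Context: Let $\mathcal S=(2^\omega,(F_\nu)_{\nu\in 2^{<\omega}},(R_\nu)_{\nu\in2^{<\omega}})$ where $F_\nu(\sigma)(x)=\sigma(x)+\nu(x)\bmod 2$ (with $\nu(x)=0$ for $x\ge|\nu|$) and $R_\nu(\sigma)$ holds iff $\nu\preceq\sigma$ ($\nu$ is an initial segment of $\sigma$). Let $\hat{\mathcal S}_0$, $\hat{\mathcal S}_1$ be the substructures of $\mathcal S$ generated by the constant sequence $\bar 0$, resp. $\bar 1$. Let $\mathcal S_0,\mathcal S_1$ be the relational versions of $\hat{\mathcal S}_0,\hat{\mathcal S}_1$, obtained by replacing each $F_\nu$ by its graph $graph_{F_\nu}$ (a binary relation), copied onto universe $\omega$. The class $\mathfrak C$ consists of structures with universe $\omega$ in the language with a unary relation $W$, binary relations $R_\nu$ and $graph_{F_\nu}$ ($\nu\in2^{<\omega}$), a binary relation $N$ and a ternary relation $O$. Fix a partition of $\omega$ into infinite coinfinite sets $(A_i)_{i\in\omega}$, write $A_0=\{a_0,a_1,\dots\}$, and let $\langle\cdot,\cdot\rangle$ be a pairing function. Given a graph $\mathcal G$ on $\omega$ with edge relation $E$, $f(\mathcal G)$ is defined by: $W(a_i)$ for all $a_i\in A_0$; for all $m,n$, the relations $R_\nu$, $graph_{F_\nu}$ restricted to $A_{\langle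 m,n\rangle+1}$ form a copy of $\mathcal S_0$ if $mEn$ and a copy of $\mathcal S_1$ if not $mEn$; $O(a_m,a_n,j)$ for all $j\in A_{\langle m,n\rangle+1}$; and for every $i$, $N(a_i,x)$ holds exactly for $x\in\bigcup_{j}A_{\langle i,j\rangle+1}$. No other instances of relations hold. An embedding of graphs is an injective map preserving edges and non-edges. *)

theory Defs
  imports Main
begin

type_synonym seq = "nat \<Rightarrow> bool"   (* elements of 2^omega; True = 1 *)

definition nuval :: "bool list \<Rightarrow> nat \<Rightarrow> bool" where
  "nuval \<nu> x = (x < length \<nu> \<and> \<nu> ! x)"

definition Ffun :: "bool list \<Rightarrow> seq \<Rightarrow> seq" where
  "Ffun \<nu> \<sigma> = (\<lambda>x. \<sigma> x \<noteq> nuval \<nu> x)"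

definition Rrel :: "bool list \<Rightarrow> seq \<Rightarrow> bool" where
  "Rrel \<nu> \<sigma> = (\<forall>i < length \<nu>. \<sigma> i = \<nu> ! i)"

text \<open>Universe of the substructure of S generated by a constant c
  (closure of c under all F_nu; S has no other functions).\<close>
inductive_set gen :: "seq \<Rightarrow> seq set" for c :: seq where
  base: "c \<in> gen c"
| step: "\<sigma> \<in> gen c \<Longrightarrow> Ffun \<nu> \<sigma> \<in> gen c"

definition zero_seq :: seq where "zero_seq = (\<lambda>_. False)"
definition one_seq :: seq where "one_seq = (\<lambda>_. True)"

datatype rsym = WRel | RRel "bool list" | GRel "bool list" | NRel | ORel

fun arity :: "rsym \<Rightarrow> nat" where
  "arity WRel = 1"
| "arity (RRel _) = 1"
| "arity (GRel _) = 2"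
| "arity NRel = 2"
| "arity ORel = 3"

type_synonym struc = "rsym \<Rightarrow> nat list \<Rightarrow> bool"

datatype fm = Atom rsym "nat list" | Eq nat nat | Neg fm | Conj fm fm | Ex nat fm

fun sat :: "struc \<Rightarrow> (nat \<Rightarrow> nat) \<Rightarrow> fm \<Rightarrow> bool" where
  "sat M e (Atom r xs) = M r (map e xs)"
| "sat M e (Eq i j) = (e i = e j)"
| "sat M e (Neg \<phi>) = (\<not> sat M e \<phi>)"
| "sat M e (Conj \<phi> \<psi>) = (sat M e \<phi> \<and> sat M e \<psi>)"
| "sat M e (Ex i \<phi>) = (\<exists>x. sat M (e(i := x)) \<phi>)"

definition elem_emb :: "struc \<Rightarrow> struc \<Rightarrow> (nat \<Rightarrow> nat) \<Rightarrow> bool" where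
  "elem_emb M N h = (\<forall>\<phi> e. sat M e \<phi> = sat N (h \<circ> e) \<phi>)"

definition elem_embeddable :: "struc \<Rightarrow> struc \<Rightarrow> bool" where
  "elem_embeddable M N = (\<exists>h. elem_emb M N h)"

definition is_graph :: "(nat \<Rightarrow> nat \<Rightarrow> bool) \<Rightarrow> bool" where
  "is_graph E = ((\<forall>m n. E m n \<longrightarrow> E n m) \<and> (\<forall>m. \<not> E m m))"

definition graph_embeds :: "(nat \<Rightarrow> nat \<Rightarrow> bool) \<Rightarrow> (nat \<Rightarrow> nat \<Rightarrow> bool) \<Rightarrow> bool" where
  "graph_embeds E E' = (\<exists>g. inj g \<and> (\<forall>m n. E m n = E' (g m) (g n)))"

definition good_params ::
  "(nat \<Rightarrow> nat set) \<Rightarrow> (nat \<Rightarrow> nat) \<Rightarrow> (nat \<Rightarrow> nat \<Rightarrow> nat)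
   \<Rightarrow> (nat \<Rightarrow> nat \<Rightarrow> seq) \<Rightarrow> (nat \<Rightarrow> nat \<Rightarrow> seq) \<Rightarrow> bool" where
  "good_params A a pr c0 c1 =
     ((\<forall>i. infinite (A i) \<and> infinite (- A i))
      \<and> (\<forall>i j. i \<noteq> j \<longrightarrow> A i \<inter> A j = {})
      \<and> (\<Union>i. A i) = UNIV
      \<and> bij_betw a UNIV (A 0)
      \<and> bij (\<lambda>(m, n). pr m n)
      \<and> (\<forall>k. bij_betw (c0 k) (A k) (gen zero_seq))
      \<and> (\<forall>k. bij_betw (c1 k) (A k) (gen one_seq)))"

definition cp :: "(nat \<Rightarrow> nat \<Rightarrow> nat) \<Rightarrow> (nat \<Rightarrow> nat \<Rightarrow> seq) \<Rightarrow> (nat \<Rightarrow> nat \<Rightarrow> seq)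
   \<Rightarrow> (nat \<Rightarrow> nat \<Rightarrow> bool) \<Rightarrow> nat \<Rightarrow> nat \<Rightarrow> nat \<Rightarrow> seq" where
  "cp pr c0 c1 E m n = (if E m n then c0 (pr m n + 1) else c1 (pr m n + 1))"

fun fG :: "(nat \<Rightarrow> nat set) \<Rightarrow> (nat \<Rightarrow> nat) \<Rightarrow> (nat \<Rightarrow> nat \<Rightarrow> nat)
   \<Rightarrow> (nat \<Rightarrow> nat \<Rightarrow> seq) \<Rightarrow> (nat \<Rightarrow> nat \<Rightarrow> seq) \<Rightarrow> (nat \<Rightarrow> nat \<Rightarrow> bool) \<Rightarrow> struc" where
  "fG A a pr c0 c1 E WRel xs =
     (\<exists>x. xs = [x] \<and> x \<in> A 0)"
| "fG A a pr c0 c1 E (RRel \<nu>) xs =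
     (\<exists>x m n. xs = [x] \<and> x \<in> A (pr m n + 1) \<and> Rrel \<nu> (cp pr c0 c1 E m n x))"
| "fG A a pr c0 c1 E (GRel \<nu>) xs =
     (\<exists>x y m n. xs = [x, y] \<and> x \<in> A (pr m n + 1) \<and> y \<in> A (pr m n + 1)
        \<and> Ffun \<nu> (cp pr c0 c1 E m n x) = cp pr c0 c1 E m n y)"
| "fG A a pr c0 c1 E NRel xs =
     (\<exists>i j y. xs = [a i, y] \<and> y \<in> A (pr i j + 1))"
| "fG A a pr c0 c1 E ORel xs =
     (\<exists>m n z. xs = [a m, a n, z] \<and> z \<in> A (pr m n + 1))"

end

theory Submission
  imports Defs "HOL-Library.Infinite_Set"
begin

(* An element of f(G) is either a vertex a_i or a point of the copy of S_0 or S_1 over an ordered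
   pair (m, n), coded by its coordinate sigma in 2^omega; S_0 and S_1 are the sequences differing
   finitely from 0 resp. 1.  Flipping all bits of sigma from position L on maps S_0 onto S_1,
   commutes with every F_nu and leaves R_nu unchanged when |nu| <= L.

   Given a graph embedding g and a formula phi with an assignment, extend g to a permutation pi
   of the vertices agreeing with g on the finitely many vertices involved, and map f(G) onto
   f(H) by pi on vertices and copies, flipping beyond the maximal |nu| occurring in phi over
   the pairs whose edge status pi changes.  This is an isomorphism for the symbols of phi, and
   on the assignment it agrees with the lift of g itself, which is therefore elementary.

   Conversely, an elementary embedding h maps vertices to vertices (W), hence induces an
   injection g; it maps the copy over (m, n) into the copy over (g m, g n) (O) and preserves
   coordinates (all R_nu); as S_0 and S_1 are disjoint, E m n = E' (g m) (g n). *)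

fun symbols :: "fm \<Rightarrow> rsym set" where
  "symbols (Atom r xs) = {r}"
| "symbols (Eq i j) = {}"
| "symbols (Neg \<phi>) = symbols \<phi>"
| "symbols (Conj \<phi> \<psi>) = symbols \<phi> \<union> symbols \<psi>"
| "symbols (Ex i \<phi>) = symbols \<phi>"

fun vars :: "fm \<Rightarrow> nat set" where
  "vars (Atom r xs) = set xs"
| "vars (Eq i j) = {i, j}"
| "vars (Neg \<phi>) = vars \<phi>"
| "vars (Conj \<phi> \<psi>) = vars \<phi> \<union> vars \<psi>"
| "vars (Ex i \<phi>) = insert i (vars \<phi>)"

lemma finite_symbols: "finite (symbols \<phi>)"
  by (induction \<phi>) auto

lemma finite_vars: "finite (vars \<phi>)"
  by (induction \<phi>) auto

lemma sat_cong: "(\<And>i. i \<in> vars \<phi> \<Longrightarrow> e i = e' i) \<Longrightarrow> sat M e \<phi> = sat M e' \<phi>"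
proof (induction \<phi> arbitrary: e e')
  case (Atom r xs)
  then show ?case by (simp cong: map_cong)
next
  case (Neg \<phi>)
  then show ?case by (metis sat.simps(3) vars.simps(3))
next
  case (Conj \<phi> \<psi>)
  then show ?case by (metis UnCI sat.simps(4) vars.simps(4))
next
  case (Ex i \<phi>)
  then have "sat M (e(i := x)) \<phi> = sat M (e'(i := x)) \<phi>" for x
    by (intro Ex.IH) auto
  then show ?case by simp
qed simp

lemma sat_bij_transfer:
  assumes "bij \<Phi>" and "\<And>r xs. r \<in> symbols \<phi> \<Longrightarrow> M r xs = N r (map \<Phi> xs)"
  shows "sat M e \<phi> = sat N (\<Phi> \<circ> e) \<phi>"
  using assms(2)
proof (induction \<phi> arbitrary: e)
  case (Eq i j)
  show ?case using bij_is_inj[OF assms(1)] by (simp add: inj_eq)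
next
  case (Ex i \<phi>)
  have upd: "(\<Phi> \<circ> e)(i := \<Phi> x) = \<Phi> \<circ> e(i := x)" for x
    by auto
  have "sat M (e(i := x)) \<phi> \<longleftrightarrow> sat N ((\<Phi> \<circ> e)(i := \<Phi> x)) \<phi>" for x
    unfolding upd by (rule Ex.IH) (use Ex.prems in simp)
  then have "sat M e (Ex i \<phi>) \<longleftrightarrow> (\<exists>x. sat N ((\<Phi> \<circ> e)(i := \<Phi> x)) \<phi>)"
    by simp
  also have "\<dots> \<longleftrightarrow> (\<exists>y. sat N ((\<Phi> \<circ> e)(i := y)) \<phi>)"
    using bij_is_surj[OF assms(1)] by (metis surj_f_inv_f)
  finally show ?case by (simp only: sat.simps)
qed (auto simp: comp_def)

lemma elem_emb_atom: "elem_emb M N h \<Longrightarrow> M r xs = N r (map h xs)"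
proof -
  assume "elem_emb M N h"
  then have "sat M (nth xs) (Atom r [0..<length xs]) = sat N (h \<circ> nth xs) (Atom r [0..<length xs])"
    unfolding elem_emb_def by blast
  then show ?thesis by (simp add: map_nth flip: map_map)
qed

lemma elem_emb_inj: "elem_emb M N h \<Longrightarrow> inj h"
proof (rule injI)
  fix x y assume "elem_emb M N h" and "h x = h y"
  let ?e = "\<lambda>i::nat. if i = 0 then x else y"
  have "sat M ?e (Eq 0 1) = sat N (h \<circ> ?e) (Eq 0 1)"
    using \<open>elem_emb M N h\<close> unfolding elem_emb_def by blast
  then show "x = y" using \<open>h x = h y\<close> by simp
qed

lemma finite_inj_extends_to_bij:
  fixes g :: "nat \<Rightarrow> nat"
  assumes "finite S" and "inj g"
  obtains \<pi> where "bij \<pi>" and "\<And>i. i \<in> S \<Longrightarrow> \<pi> i = g i"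
proof -
  have inf: "infinite (- S)" "infinite (- g ` S)"
    using assms(1) by (simp_all add: Compl_eq_Diff_UNIV Diff_infinite_finite)
  define \<psi> where "\<psi> = enumerate (- g ` S) \<circ> inv_into UNIV (enumerate (- S))"
  have \<psi>: "bij_betw \<psi> (- S) (- g ` S)"
    unfolding \<psi>_def using bij_enumerate[OF inf(1)] bij_enumerate[OF inf(2)]
    by (blast intro: bij_betw_trans bij_betw_inv_into)
  have g: "bij_betw g S (g ` S)"
    using inj_on_subset[OF assms(2) subset_UNIV] by (simp add: bij_betw_def)
  define \<pi> where "\<pi> i = (if i \<in> S then g i else \<psi> i)" for i
  have "bij_betw \<pi> S (g ` S)"
    using g by (rule bij_betw_cong[THEN iffD1, rotated]) (simp add: \<pi>_def)
  moreover have "bij_betw \<pi> (- S) (- g ` S)"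
    using \<psi> by (rule bij_betw_cong[THEN iffD1, rotated]) (simp add: \<pi>_def)
  ultimately have "bij_betw \<pi> (S \<union> - S) (g ` S \<union> - g ` S)"
    by (intro bij_betw_combine) auto
  then show ?thesis
    by (intro that[of \<pi>]) (auto simp: \<pi>_def)
qed

definition seq_xor :: "seq \<Rightarrow> seq \<Rightarrow> seq" where
  "seq_xor \<sigma> d = (\<lambda>i. \<sigma> i \<noteq> d i)"

lemma seq_xor_cancel [simp]: "seq_xor (seq_xor \<sigma> d) d = \<sigma>"
  unfolding seq_xor_def by (rule ext) blast

lemma seq_xor_inject [simp]: "seq_xor \<sigma> d = seq_xor \<tau> d \<longleftrightarrow> \<sigma> = \<tau>"
  by (metis seq_xor_cancel)

lemma Ffun_seq_xor: "Ffun \<nu> (seq_xor \<sigma> d) = seq_xor (Ffun \<nu> \<sigma>) d"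
  by (auto simp: Ffun_def seq_xor_def)

lemma Rrel_seq_xor: "(\<And>i. i < length \<nu> \<Longrightarrow> \<not> d i) \<Longrightarrow> Rrel \<nu> (seq_xor \<sigma> d) = Rrel \<nu> \<sigma>"
  by (simp add: Rrel_def seq_xor_def)

lemma Rrel_determines_seq:
  assumes "\<And>\<nu>. Rrel \<nu> \<sigma> \<Longrightarrow> Rrel \<nu> \<tau>"
  shows "\<tau> = \<sigma>"
proof
  fix i
  have "Rrel (map \<sigma> [0..<Suc i]) \<tau>"
    by (rule assms) (simp add: Rrel_def del: upt_Suc)
  then show "\<tau> i = \<sigma> i"
    by (simp add: Rrel_def del: upt_Suc)
qed

lemma gen_iff_finite_diff: "\<sigma> \<in> gen c \<longleftrightarrow> finite {i. \<sigma> i \<noteq> c i}"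
proof
  show "finite {i. \<sigma> i \<noteq> c i}" if "\<sigma> \<in> gen c"
    using that
  proof (induction rule: gen.induct)
    case (step \<sigma> \<nu>)
    have "{i. Ffun \<nu> \<sigma> i \<noteq> c i} \<subseteq> {i. \<sigma> i \<noteq> c i} \<union> {..<length \<nu>}"
      by (auto simp: Ffun_def nuval_def)
    then show ?case
      using step.IH by (rule finite_subset[OF _ finite_UnI]) simp
  qed simp
next
  assume "finite {i. \<sigma> i \<noteq> c i}"
  then obtain N where N: "\<forall>i \<in> {i. \<sigma> i \<noteq> c i}. i < N"
    by (auto simp: finite_nat_set_iff_bounded)
  have "Ffun (map (\<lambda>i. \<sigma> i \<noteq> c i) [0..<N]) c = \<sigma>"
    using N by (auto simp: Ffun_def nuval_def)
  then show "\<sigma> \<in> gen c"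
    by (metis gen.base gen.step)
qed

lemma gen_disjoint:
  assumes "infinite {i. c i \<noteq> c' i}"
  shows "gen c \<inter> gen c' = {}"
proof (intro equals0I)
  fix \<sigma> assume "\<sigma> \<in> gen c \<inter> gen c'"
  then have "finite ({i. \<sigma> i \<noteq> c i} \<union> {i. \<sigma> i \<noteq> c' i})"
    by (simp add: gen_iff_finite_diff)
  moreover have "{i. c i \<noteq> c' i} \<subseteq> {i. \<sigma> i \<noteq> c i} \<union> {i. \<sigma> i \<noteq> c' i}"
    by auto
  ultimately show False
    using assms finite_subset by blast
qed

definition generator :: "bool \<Rightarrow> seq" where
  "generator b = (if b then zero_seq else one_seq)"

definition tail_flip :: "nat \<Rightarrow> bool \<Rightarrow> bool \<Rightarrow> seq" where
  "tail_flip L b b' = (\<lambda>i. b \<noteq> b' \<and> L \<le> i)"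

lemma gen_generator_disjoint: "b \<noteq> b' \<Longrightarrow> gen (generator b) \<inter> gen (generator b') = {}"
  by (rule gen_disjoint) (auto simp: generator_def zero_seq_def one_seq_def)

lemma seq_xor_tail_flip_gen:
  assumes "\<sigma> \<in> gen (generator b)"
  shows "seq_xor \<sigma> (tail_flip L b b') \<in> gen (generator b')"
proof -
  have "{i. seq_xor \<sigma> (tail_flip L b b') i \<noteq> generator b' i} \<subseteq> {i. \<sigma> i \<noteq> generator b i} \<union> {..<L}"
    by (auto simp: seq_xor_def tail_flip_def generator_def zero_seq_def one_seq_def)
  then show ?thesis
    using assms by (auto simp: gen_iff_finite_diff intro: finite_subset)
qed

(* Vertex i stands for a_i, and Point m n sigma for the element with coordinate sigma of the
   copy over (m, n). *)
datatype node = Vertex nat | Point nat nat seq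

fun node_rel :: "rsym \<Rightarrow> node list \<Rightarrow> bool" where
  "node_rel WRel [Vertex i] = True"
| "node_rel (RRel \<nu>) [Point m n \<sigma>] = Rrel \<nu> \<sigma>"
| "node_rel (GRel \<nu>) [Point m n \<sigma>, Point m' n' \<tau>] = (m = m' \<and> n = n' \<and> Ffun \<nu> \<sigma> = \<tau>)"
| "node_rel NRel [Vertex i, Point m n \<sigma>] = (i = m)"
| "node_rel ORel [Vertex i, Vertex j, Point m n \<sigma>] = (i = m \<and> j = n)"
| "node_rel _ _ = False"

definition nodes :: "(nat \<Rightarrow> nat \<Rightarrow> bool) \<Rightarrow> node set" where
  "nodes E = range Vertex \<union> (\<Union>m n. Point m n ` gen (generator (E m n)))"

fun node_vertices :: "node \<Rightarrow> nat set" where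
  "node_vertices (Vertex i) = {i}"
| "node_vertices (Point m n \<sigma>) = {m, n}"

lemma finite_node_vertices: "finite (node_vertices p)"
  by (cases p) auto

fun node_map :: "(nat \<Rightarrow> nat \<Rightarrow> bool) \<Rightarrow> (nat \<Rightarrow> nat \<Rightarrow> bool) \<Rightarrow> (nat \<Rightarrow> nat) \<Rightarrow> nat \<Rightarrow> node \<Rightarrow> node"
  where
  "node_map E E' \<pi> L (Vertex i) = Vertex (\<pi> i)"
| "node_map E E' \<pi> L (Point m n \<sigma>) =
     Point (\<pi> m) (\<pi> n) (seq_xor \<sigma> (tail_flip L (E m n) (E' (\<pi> m) (\<pi> n))))"

fun rlen :: "rsym \<Rightarrow> nat" where
  "rlen (RRel \<nu>) = length \<nu>"
| "rlen _ = 0"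

lemma node_map_nodes: "p \<in> nodes E \<Longrightarrow> node_map E E' \<pi> L p \<in> nodes E'"
  by (auto simp: nodes_def) (metis image_eqI seq_xor_tail_flip_gen)

lemma node_map_inverse: "inj \<pi> \<Longrightarrow> node_map E' E (inv \<pi>) L (node_map E E' \<pi> L p) = p"
  by (cases p) (auto simp: tail_flip_def seq_xor_def)

lemma node_rel_node_map:
  assumes "inj \<pi>" and "rlen r \<le> L"
  shows "node_rel r (map (node_map E E' \<pi> L) ps) = node_rel r ps"
  using assms(2)
  by (induction r ps rule: node_rel.induct)
    (auto simp: inj_eq[OF assms(1)] Rrel_seq_xor Ffun_seq_xor tail_flip_def)

lemma node_map_agree:
  assumes "\<And>i. i \<in> node_vertices p \<Longrightarrow> \<pi> i = g i" and "\<And>m n. E m n = E' (g m) (g n)"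
  shows "node_map E E' \<pi> L p = node_map E E' g 0 p"
  using assms by (cases p) (auto simp: tail_flip_def)

locale reduction =
  fixes A :: "nat \<Rightarrow> nat set" and a :: "nat \<Rightarrow> nat" and pr :: "nat \<Rightarrow> nat \<Rightarrow> nat"
    and c0 c1 :: "nat \<Rightarrow> nat \<Rightarrow> seq"
  assumes good_params: "good_params A a pr c0 c1"
begin

(* Written with Suc, the simp normal form of the index pr m n + 1 used in Defs. *)
abbreviation piece :: "nat \<Rightarrow> nat \<Rightarrow> nat set" where
  "piece m n \<equiv> A (Suc (pr m n))"

abbreviation fG_of :: "(nat \<Rightarrow> nat \<Rightarrow> bool) \<Rightarrow> struc" where
  "fG_of E \<equiv> fG A a pr c0 c1 E"

lemma A_disjoint: "x \<in> A i \<Longrightarrow> x \<in> A j \<Longrightarrow> i = j"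
  using good_params unfolding good_params_def by blast

lemma A_cover: "\<exists>i. x \<in> A i"
  using good_params unfolding good_params_def by blast

lemma bij_a: "bij_betw a UNIV (A 0)"
  using good_params by (simp add: good_params_def)

lemma pr_inject: "pr m n = pr m' n' \<longleftrightarrow> m = m' \<and> n = n'"
proof -
  have "inj (\<lambda>(m, n). pr m n)"
    using good_params by (simp add: good_params_def bij_def)
  from injD[OF this, of "(m, n)" "(m', n')"] show ?thesis
    by auto
qed

lemma pr_surj: "\<exists>m n. pr m n = k"
proof -
  have "k \<in> range (\<lambda>(m, n). pr m n)"
    using good_params by (simp add: good_params_def bij_def)
  then show ?thesis by auto
qed

lemma bij_cp: "bij_betw (cp pr c0 c1 E m n) (piece m n) (gen (generator (E m n)))"
  using good_params unfolding good_params_def by (simp add: cp_def generator_def)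

lemma piece_nonempty: "\<exists>x. x \<in> piece m n"
proof -
  have "infinite (piece m n)"
    using good_params by (simp add: good_params_def)
  then show ?thesis
    by (metis ex_in_conv finite.emptyI)
qed

lemma a_in_A0 [simp]: "a i \<in> A 0"
  using bij_a by (rule bij_betw_apply) simp

lemma a_inject [simp]: "a i = a j \<longleftrightarrow> i = j"
  using bij_a by (simp add: bij_betw_def inj_eq)

lemma piece_not_A0: "x \<in> piece m n \<Longrightarrow> x \<notin> A 0"
  using A_disjoint[of x 0 "Suc (pr m n)"] by auto

lemma a_notin_piece [simp]: "a i \<notin> piece m n"
  using piece_not_A0 a_in_A0 by blast

lemma piece_unique: "x \<in> piece m n \<Longrightarrow> x \<in> piece m' n' \<Longrightarrow> m' = m \<and> n' = n"
  using A_disjoint[of x "Suc (pr m n)" "Suc (pr m' n')"] by (auto simp: pr_inject)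

lemma node_cases:
  obtains (vertex) i where "x = a i" | (point) m n where "x \<in> piece m n"
proof (cases "x \<in> A 0")
  case True
  then have "x \<in> range a"
    using bij_a by (simp add: bij_betw_def)
  then show ?thesis
    using that(1) by blast
next
  case False
  obtain k where k: "x \<in> A k"
    using A_cover by blast
  with False have "k \<noteq> 0"
    by (cases "k = 0") auto
  moreover obtain m n where "pr m n = k - 1"
    using pr_surj by blast
  ultimately have "x \<in> piece m n"
    using k by simp
  then show ?thesis
    by (rule that(2))
qed

definition decode :: "(nat \<Rightarrow> nat \<Rightarrow> bool) \<Rightarrow> nat \<Rightarrow> node" where
  "decode E x = (if x \<in> A 0 then Vertex (inv a x)
     else (SOME p. \<exists>m n. x \<in> piece m n \<and> p = Point m n (cp pr c0 c1 E m n x)))"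

lemma decode_a [simp]: "decode E (a i) = Vertex i"
  using bij_a by (simp add: decode_def bij_betw_def)

lemma decode_piece: "x \<in> piece m n \<Longrightarrow> decode E x = Point m n (cp pr c0 c1 E m n x)"
proof -
  assume x: "x \<in> piece m n"
  let ?P = "\<lambda>p. \<exists>m n. x \<in> piece m n \<and> p = Point m n (cp pr c0 c1 E m n x)"
  have "?P (SOME p. ?P p)"
    by (rule someI) (use x in blast)
  then obtain m' n' where "x \<in> piece m' n'"
    and some: "(SOME p. ?P p) = Point m' n' (cp pr c0 c1 E m' n' x)"
    by blast
  with x have "m' = m" and "n' = n"
    using piece_unique by blast+
  then show ?thesis
    using some x piece_not_A0 by (simp add: decode_def)
qed

fun encode :: "(nat \<Rightarrow> nat \<Rightarrow> bool) \<Rightarrow> node \<Rightarrow> nat" where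
  "encode E (Vertex i) = a i"
| "encode E (Point m n \<sigma>) = inv_into (piece m n) (cp pr c0 c1 E m n) \<sigma>"

lemma encode_decode [simp]: "encode E (decode E x) = x"
proof (cases x rule: node_cases)
  case (point m n)
  then show ?thesis
    using bij_cp by (simp add: decode_piece bij_betw_def)
qed simp

lemma decode_in_nodes: "decode E x \<in> nodes E"
proof (cases x rule: node_cases)
  case (point m n)
  then have "cp pr c0 c1 E m n x \<in> gen (generator (E m n))"
    using bij_cp by (rule bij_betw_apply[rotated])
  with point show ?thesis
    unfolding nodes_def by (auto simp: decode_piece)
qed (simp add: nodes_def)

lemma decode_encode: "p \<in> nodes E \<Longrightarrow> decode E (encode E p) = p"
proof (induction p)
  case (Point m n \<sigma>)
  then have "\<sigma> \<in> cp pr c0 c1 E m n ` piece m n"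
    using bij_cp by (auto simp: nodes_def bij_betw_def)
  then have "inv_into (piece m n) (cp pr c0 c1 E m n) \<sigma> \<in> piece m n"
    by (rule inv_into_into)
  then show ?case
    using \<open>\<sigma> \<in> _\<close> by (simp add: decode_piece f_inv_into_f)
qed simp

lemma fG_arity: "fG_of E r xs \<Longrightarrow> length xs = arity r"
  by (cases r) auto

lemma node_rel_arity: "node_rel r ps \<Longrightarrow> length ps = arity r"
  by (induction r ps rule: node_rel.induct) auto

lemma fG_decode: "fG_of E r xs = node_rel r (map (decode E) xs)"
proof (cases "length xs = arity r")
  case False
  then show ?thesis
    using fG_arity node_rel_arity by (metis length_map)
next
  case True
  show ?thesis
  proof (cases r)
    case WRel
    with True obtain x where "xs = [x]"
      by (auto simp: length_Suc_conv)
    then show ?thesis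
      using WRel by (cases x rule: node_cases) (auto simp: decode_piece dest: A_disjoint)
  next
    case (RRel \<nu>)
    with True obtain x where "xs = [x]"
      by (auto simp: length_Suc_conv)
    then show ?thesis
      using RRel by (cases x rule: node_cases) (auto simp: decode_piece dest: piece_unique)
  next
    case (GRel \<nu>)
    with True obtain x y where "xs = [x, y]"
      by (auto simp: length_Suc_conv eval_nat_numeral)
    then show ?thesis
      using GRel by (cases x rule: node_cases; cases y rule: node_cases)
        (auto simp: decode_piece dest: piece_unique)
  next
    case NRel
    with True obtain x y where "xs = [x, y]"
      by (auto simp: length_Suc_conv eval_nat_numeral)
    then show ?thesis
      using NRel by (cases x rule: node_cases; cases y rule: node_cases)
        (auto simp: decode_piece dest: piece_unique)
  next
    case ORel
    with True obtain x y z where "xs = [x, y, z]"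
      by (auto simp: length_Suc_conv eval_nat_numeral)
    then show ?thesis
      using ORel by (cases x rule: node_cases; cases y rule: node_cases; cases z rule: node_cases)
        (auto simp: decode_piece dest: piece_unique)
  qed
qed

definition lift :: "(nat \<Rightarrow> nat \<Rightarrow> bool) \<Rightarrow> (nat \<Rightarrow> nat \<Rightarrow> bool) \<Rightarrow> (nat \<Rightarrow> nat) \<Rightarrow> nat \<Rightarrow> nat \<Rightarrow> nat"
  where "lift E E' \<pi> L x = encode E' (node_map E E' \<pi> L (decode E x))"

lemma decode_lift: "decode E' (lift E E' \<pi> L x) = node_map E E' \<pi> L (decode E x)"
  by (simp add: lift_def decode_encode node_map_nodes decode_in_nodes)

lemma lift_inverse: "inj \<pi> \<Longrightarrow> lift E' E (inv \<pi>) L (lift E E' \<pi> L x) = x"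
  by (simp add: lift_def[of E' E] decode_lift node_map_inverse)

lemma bij_lift:
  assumes "bij \<pi>"
  shows "bij (lift E E' \<pi> L)"
proof (rule bij_betw_byWitness[where f' = "lift E' E (inv \<pi>) L"])
  have "lift E E' (inv (inv \<pi>)) L (lift E' E (inv \<pi>) L y) = y" for y
    using assms by (intro lift_inverse) (simp add: bij_is_inj bij_imp_bij_inv)
  then show "\<forall>y\<in>UNIV. lift E E' \<pi> L (lift E' E (inv \<pi>) L y) = y"
    using assms by (simp add: inv_inv_eq)
qed (use assms in \<open>simp_all add: bij_is_inj lift_inverse\<close>)

lemma lift_preserves_atoms:
  assumes "inj \<pi>" and "rlen r \<le> L"
  shows "fG_of E' r (map (lift E E' \<pi> L) xs) = fG_of E r xs"
proof -
  have "fG_of E' r (map (lift E E' \<pi> L) xs) = node_rel r (map (node_map E E' \<pi> L) (map (decode E) xs))"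
    by (simp add: fG_decode decode_lift comp_def)
  also have "\<dots> = node_rel r (map (decode E) xs)"
    by (rule node_rel_node_map[OF assms])
  also have "\<dots> = fG_of E r xs"
    by (simp add: fG_decode)
  finally show ?thesis .
qed

lemma elem_emb_lift:
  assumes "inj g" and edges: "\<And>m n. E m n = E' (g m) (g n)"
  shows "elem_emb (fG_of E) (fG_of E') (lift E E' g 0)"
  unfolding elem_emb_def
proof (intro allI)
  fix \<phi> e
  let ?S = "\<Union>j\<in>vars \<phi>. node_vertices (decode E (e j))"
  have "finite ?S"
    by (simp add: finite_vars finite_node_vertices)
  then obtain \<pi> where "bij \<pi>" and \<pi>: "\<And>i. i \<in> ?S \<Longrightarrow> \<pi> i = g i"
    using finite_inj_extends_to_bij assms(1) by blast
  obtain L where L: "\<forall>r\<in>symbols \<phi>. rlen r \<le> L"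
    using finite_symbols[of \<phi>] finite_nat_set_iff_bounded_le[of "rlen ` symbols \<phi>"] by auto
  have "sat (fG_of E) e \<phi> = sat (fG_of E') (lift E E' \<pi> L \<circ> e) \<phi>"
    using bij_lift[OF \<open>bij \<pi>\<close>] lift_preserves_atoms[OF bij_is_inj[OF \<open>bij \<pi>\<close>]] L
    by (intro sat_bij_transfer) auto
  also have "\<dots> = sat (fG_of E') (lift E E' g 0 \<circ> e) \<phi>"
  proof (rule sat_cong)
    fix j assume "j \<in> vars \<phi>"
    then have "node_map E E' \<pi> L (decode E (e j)) = node_map E E' g 0 (decode E (e j))"
      using \<pi> edges by (intro node_map_agree) auto
    then show "(lift E E' \<pi> L \<circ> e) j = (lift E E' g 0 \<circ> e) j"
      by (simp add: lift_def)
  qed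
  finally show "sat (fG_of E) e \<phi> = sat (fG_of E') (lift E E' g 0 \<circ> e) \<phi>" .
qed

lemma elem_emb_node_rel:
  assumes "elem_emb (fG_of E) (fG_of E') h"
  shows "node_rel r (map (decode E' \<circ> h) xs) = node_rel r (map (decode E) xs)"
  using elem_emb_atom[OF assms, of r xs] by (simp add: fG_decode)

lemma elem_emb_vertex_map:
  assumes h: "elem_emb (fG_of E) (fG_of E') h"
  obtains g where "inj g" and "\<And>i. decode E' (h (a i)) = Vertex (g i)"
proof -
  have "\<exists>j. decode E' (h (a i)) = Vertex j" for i
    using elem_emb_node_rel[OF h, of WRel "[a i]"] by (cases "decode E' (h (a i))") auto
  then obtain g where g: "\<And>i. decode E' (h (a i)) = Vertex (g i)"
    by metis
  have "inj g"
  proof (rule injI)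
    fix i j assume "g i = g j"
    then have "encode E' (decode E' (h (a i))) = encode E' (decode E' (h (a j)))"
      by (simp only: g)
    then show "i = j"
      using elem_emb_inj[OF h] by (simp add: inj_eq)
  qed
  with g show ?thesis
    using that by blast
qed

lemma elem_emb_preserves_edges:
  assumes h: "elem_emb (fG_of E) (fG_of E') h"
    and g: "\<And>i. decode E' (h (a i)) = Vertex (g i)"
  shows "E m n = E' (g m) (g n)"
proof -
  obtain x where x: "x \<in> piece m n"
    using piece_nonempty by blast
  define \<sigma> where "\<sigma> = cp pr c0 c1 E m n x"
  have dx: "decode E x = Point m n \<sigma>"
    using x by (simp add: decode_piece \<sigma>_def)
  have "node_rel ORel [Vertex (g m), Vertex (g n), decode E' (h x)]"
    using elem_emb_node_rel[OF h, of ORel "[a m, a n, x]"] dx g by simp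
  then obtain \<tau> where dhx: "decode E' (h x) = Point (g m) (g n) \<tau>"
    by (cases "decode E' (h x)") auto
  have "Rrel \<nu> \<tau>" if "Rrel \<nu> \<sigma>" for \<nu>
    using elem_emb_node_rel[OF h, of "RRel \<nu>" "[x]"] dx dhx that by simp
  then have "\<tau> = \<sigma>"
    by (rule Rrel_determines_seq)
  moreover have "\<sigma> \<in> gen (generator (E m n))"
    unfolding \<sigma>_def using bij_cp x by (rule bij_betw_apply)
  moreover have "\<tau> \<in> gen (generator (E' (g m) (g n)))"
    using decode_in_nodes[of E' "h x"] by (auto simp: dhx nodes_def)
  ultimately show ?thesis
    using gen_generator_disjoint by blast
qed

lemma graph_embeds_if_elem_emb: "elem_emb (fG_of E) (fG_of E') h \<Longrightarrow> graph_embeds E E'"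
  unfolding graph_embeds_def by (metis elem_emb_vertex_map elem_emb_preserves_edges)

end

theorem lemma3p2:
  assumes "good_params A a pr c0 c1"
    and "is_graph E" and "is_graph E'"
  shows "graph_embeds E E' \<longleftrightarrow>
         elem_embeddable (fG A a pr c0 c1 E) (fG A a pr c0 c1 E')"
proof -
  interpret reduction A a pr c0 c1
    using assms(1) by unfold_locales
  show ?thesis
    unfolding elem_embeddable_def
    using elem_emb_lift graph_embeds_if_elem_emb by (auto simp: graph_embeds_def)
qed

end
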